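(* For every combinatorial auction with nonempty winner set $W$ and every bidder $i\in N$, the BLO outcome $\pi^{BLO}$ satisfies $\pi^{BLO}_i\ge \frac{1}{|W|}\pi^*_i$, where $\pi^*_i=\max\{\pi_i:\pi\in U\}$. The bound is tight: for every integer $k\ge1$ there is a combinatorial auction with $|W|=k$ and a bidder $i$ with $\pi^*_i>0$ and $\pi^{BLO}_i=\frac{1}{k}\pi^*_i$.
   Context: A combinatorial auction (CA) has a finite set of bidders $N=\{1,\dots,n\}$, a finite set of items $M$, and for each bidder $i$ a valuation $v_i:2^M\to\mathbb{R}_{\ge 0}$ with $v_i(\emptyset)=0$ (bids are assumed equal to true valuations). For $S\subseteq N$ let $w(S)=\max\{\sum_{i\in S}v_i(a_i): a_i\subseteq M,\ a_i\cap a_j=\emptyset\ (i\ne j)\}$ (with $w(\emptyset)=0$). Fix an allocation $(a^*_i)_{i\in N}$ attaining $w(N)$; the winner set is $W=\{i: a^*_i\neq\emptyset\}$. The core is $U=\{\pi\in\mathbb{R}^N:\ \pi_i\ge 0\ \forall i\in N,\ \sum_{i\in N\setminus S}\pi_i\le w(N)-w(S)\ \forall S\subseteq N\}$. For $x,y\in\mathbb{R}^n$, $x$ leximin-dominates $y$ if, writing $x_{(1)}\le\dots\le x_{(n)}$ and $y_{(1)}\le\dots\le y_{(n)}$ for the sorted entries, there is $0\le k\le n-1$ with $x_{(j)}=y_{(j)}$ for $j\le k$ and $x_{(k+1)}>y_{(k+1)}$. The BLO outcome $\pi^{BLO}$ is the (unique) $\pi\in U$ that is not leximin-dominated by any $\pi'\in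 U$. *)

theory Defs
  imports Complex_Main
begin

definition valid_CA :: "nat set \<Rightarrow> nat set \<Rightarrow> (nat \<Rightarrow> nat set \<Rightarrow> real) \<Rightarrow> bool" where
  "valid_CA N M v \<longleftrightarrow> finite N \<and> finite M \<and>
     (\<forall>i\<in>N. v i {} = 0 \<and> (\<forall>A. A \<subseteq> M \<longrightarrow> v i A \<ge> 0))"

definition feasible_alloc :: "nat set \<Rightarrow> nat set \<Rightarrow> (nat \<Rightarrow> nat set) \<Rightarrow> bool" where
  "feasible_alloc M S a \<longleftrightarrow> (\<forall>i\<in>S. a i \<subseteq> M) \<and> (\<forall>i\<in>S. \<forall>j\<in>S. i \<noteq> j \<longrightarrow> a i \<inter> a j = {})"

definition wval :: "nat set \<Rightarrow> (nat \<Rightarrow> nat set \<Rightarrow> real) \<Rightarrow> nat set \<Rightarrow> real" where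
  "wval M v S = Max {(\<Sum>i\<in>S. v i (a i)) | a. feasible_alloc M S a}"

definition efficient_alloc :: "nat set \<Rightarrow> nat set \<Rightarrow> (nat \<Rightarrow> nat set \<Rightarrow> real) \<Rightarrow> (nat \<Rightarrow> nat set) \<Rightarrow> bool" where
  "efficient_alloc N M v a \<longleftrightarrow> feasible_alloc M N a \<and> (\<Sum>i\<in>N. v i (a i)) = wval M v N"

definition winners :: "nat set \<Rightarrow> (nat \<Rightarrow> nat set) \<Rightarrow> nat set" where
  "winners N a = {i\<in>N. a i \<noteq> {}}"

text \<open>The core; vectors in R^N are represented by functions vanishing outside N.\<close>
definition core :: "nat set \<Rightarrow> nat set \<Rightarrow> (nat \<Rightarrow> nat set \<Rightarrow> real) \<Rightarrow> (nat \<Rightarrow> real) set" where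
  "core N M v = {\<pi>. (\<forall>i. i \<notin> N \<longrightarrow> \<pi> i = 0) \<and> (\<forall>i\<in>N. \<pi> i \<ge> 0) \<and>
                    (\<forall>S. S \<subseteq> N \<longrightarrow> (\<Sum>i\<in>N - S. \<pi> i) \<le> wval M v N - wval M v S)}"

definition sorted_entries :: "nat set \<Rightarrow> (nat \<Rightarrow> real) \<Rightarrow> real list" where
  "sorted_entries N x = sort (map x (sorted_list_of_set N))"

definition leximin_dominates :: "nat set \<Rightarrow> (nat \<Rightarrow> real) \<Rightarrow> (nat \<Rightarrow> real) \<Rightarrow> bool" where
  "leximin_dominates N x y \<longleftrightarrow>
     (\<exists>k < card N. (\<forall>j < k. sorted_entries N x ! j = sorted_entries N y ! j) \<and>
                    sorted_entries N x ! k > sorted_entries N y ! k)"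

definition is_BLO :: "nat set \<Rightarrow> nat set \<Rightarrow> (nat \<Rightarrow> nat set \<Rightarrow> real) \<Rightarrow> (nat \<Rightarrow> real) \<Rightarrow> bool" where
  "is_BLO N M v \<pi> \<longleftrightarrow> \<pi> \<in> core N M v \<and> \<not> (\<exists>\<pi>'\<in>core N M v. leximin_dominates N \<pi>' \<pi>)"

definition pi_star :: "nat set \<Rightarrow> nat set \<Rightarrow> (nat \<Rightarrow> nat set \<Rightarrow> real) \<Rightarrow> nat \<Rightarrow> real" where
  "pi_star N M v i = Sup ((\<lambda>\<pi>. \<pi> i) ` core N M v)"

end

theory Submission
  imports Defs "HOL-Library.Multiset" "HOL-Library.FuncSet"
begin

text \<open>Suppose \<open>|W| \<pi>\<^sub>i < \<pi>\<^sup>*\<^sub>i\<close>, pick a core point \<open>p\<close> with \<open>|W| \<pi>\<^sub>i < p\<^sub>i\<close> and put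
\<open>c = p\<^sub>i / |W|\<close>. Losers pay nothing in the core, so the at most \<open>|W| - 1\<close> other bidders paying
at most \<open>\<pi>\<^sub>i\<close> pay at most \<open>(|W| - 1) c\<close> in total. Hence the vector keeping these payments,
raising bidder \<open>i\<close> to \<open>c\<close> and setting everybody else to zero is again in the core: for a
coalition \<open>S\<close> with \<open>i \<notin> S\<close> it charges \<open>N - S\<close> at most \<open>|W| c = p\<^sub>i \<le> w(N) - w(S)\<close>. A small step from
\<open>\<pi>\<close> towards that vector stays in the convex core and leximin-dominates \<open>\<pi>\<close>.

With items \<open>1..k\<close>, bidders \<open>j \<in> 1..k\<close> valuing item \<open>j\<close> at 1 and a bidder 0 valuing
the whole package at \<open>k - 1\<close>, the core is the simplex \<open>{\<pi> \<ge> 0 : \<pi>\<^sub>0 = 0, \<pi>\<^sub>1 + \<dots> + \<pi>\<^sub>k \<le> 1}\<close>,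
whose unique leximin maximum is the uniform payment \<open>1/k\<close>, while \<open>\<pi>\<^sup>*\<^sub>1 = 1\<close>.\<close>

section \<open>Coalitional values and the core\<close>

lemma finite_alloc_values:
  assumes "finite S" "finite M"
  shows "finite {(\<Sum>i\<in>S. v i (a i)) | a. feasible_alloc M S a}"
proof -
  have "{(\<Sum>i\<in>S. v i (a i)) | a. feasible_alloc M S a} \<subseteq>
        (\<lambda>b. \<Sum>i\<in>S. v i (b i)) ` (PiE S (\<lambda>_. Pow M))"
  proof
    fix y assume "y \<in> {(\<Sum>i\<in>S. v i (a i)) | a. feasible_alloc M S a}"
    then obtain a where y: "y = (\<Sum>i\<in>S. v i (a i))" and "feasible_alloc M S a" by blast
    then have "restrict a S \<in> PiE S (\<lambda>_. Pow M)" unfolding feasible_alloc_def by auto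
    moreover have "y = (\<Sum>i\<in>S. v i (restrict a S i))" using y by simp
    ultimately show "y \<in> (\<lambda>b. \<Sum>i\<in>S. v i (b i)) ` (PiE S (\<lambda>_. Pow M))" by blast
  qed
  moreover have "finite (PiE S (\<lambda>_. Pow M))" using assms by (simp add: finite_PiE)
  ultimately show ?thesis by (meson finite_imageI finite_subset)
qed

lemma alloc_value_le_wval:
  assumes "finite S" "finite M" "feasible_alloc M S a"
  shows "(\<Sum>i\<in>S. v i (a i)) \<le> wval M v S"
  unfolding wval_def using finite_alloc_values[OF assms(1,2)] assms(3)
  by (intro Max_ge) auto

lemma wval_le:
  assumes "finite S" "finite M" "\<And>a. feasible_alloc M S a \<Longrightarrow> (\<Sum>i\<in>S. v i (a i)) \<le> B"
  shows "wval M v S \<le> B"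
proof -
  have "feasible_alloc M S (\<lambda>_. {})" unfolding feasible_alloc_def by auto
  then show ?thesis
    unfolding wval_def using finite_alloc_values[OF assms(1,2), of v] assms(3)
    by (subst Max_le_iff) auto
qed

lemma core_convex_combination:
  assumes "p \<in> core N M v" "y \<in> core N M v" "0 \<le> t" "t \<le> 1"
  shows "(\<lambda>k. (1 - t) * p k + t * y k) \<in> core N M v"
proof -
  have "(\<Sum>i\<in>N - S. (1 - t) * p i + t * y i) \<le> wval M v N - wval M v S" if S: "S \<subseteq> N" for S
  proof -
    have "(\<Sum>i\<in>N - S. (1 - t) * p i + t * y i) = (1 - t) * (\<Sum>i\<in>N - S. p i) + t * (\<Sum>i\<in>N - S. y i)"
      by (simp add: sum.distrib sum_distrib_left)
    also have "\<dots> \<le> (1 - t) * (wval M v N - wval M v S) + t * (wval M v N - wval M v S)"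
      using assms S unfolding core_def by (intro add_mono mult_left_mono) auto
    also have "\<dots> = wval M v N - wval M v S" by algebra
    finally show ?thesis .
  qed
  then show ?thesis using assms unfolding core_def by auto
qed

lemma core_le_marginal_value:
  assumes "p \<in> core N M v" "finite N" "S \<subseteq> N" "j \<in> N - S"
  shows "p j \<le> wval M v N - wval M v S"
proof -
  have "p j \<le> (\<Sum>i\<in>N - S. p i)" using assms unfolding core_def by (intro member_le_sum) auto
  also have "\<dots> \<le> wval M v N - wval M v S" using assms unfolding core_def by auto
  finally show ?thesis .
qed

lemma core_loser_zero:
  assumes val: "valid_CA N M v" and eff: "efficient_alloc N M v a"
    and "p \<in> core N M v" "j \<in> N" "j \<notin> winners N a"
  shows "p j = 0"
proof -
  have fin: "finite N" "finite M" using val unfolding valid_CA_def by auto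
  have aj: "a j = {}" using assms(4,5) unfolding winners_def by auto
  have "wval M v N = (\<Sum>i\<in>N. v i (a i))" using eff unfolding efficient_alloc_def by simp
  also have "\<dots> = v j (a j) + (\<Sum>i\<in>N - {j}. v i (a i))" using fin assms(4) by (simp add: sum.remove)
  also have "\<dots> = (\<Sum>i\<in>N - {j}. v i (a i))" using val assms(4) aj unfolding valid_CA_def by auto
  also have "\<dots> \<le> wval M v (N - {j})"
    using eff fin by (intro alloc_value_le_wval) (auto simp: efficient_alloc_def feasible_alloc_def)
  finally have "p j \<le> 0" using core_le_marginal_value[OF assms(3) fin(1), of "N - {j}" j] assms(4) by auto
  then show ?thesis using assms(3,4) unfolding core_def by force
qed

lemma core_sum_lower_payments_le:
  assumes val: "valid_CA N M v" and eff: "efficient_alloc N M v a"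
    and pc: "\<pi> \<in> core N M v" and iW: "i \<in> winners N a"
  shows "(\<Sum>k\<in>{k\<in>N - {i}. \<pi> k \<le> \<pi> i}. \<pi> k) \<le> (real (card (winners N a)) - 1) * \<pi> i"
proof -
  define B where "B = {k\<in>N - {i}. \<pi> k \<le> \<pi> i}"
  define W where "W = winners N a"
  have fin: "finite N" using val unfolding valid_CA_def by auto
  have fW: "finite W" using fin unfolding W_def winners_def by auto
  have "(\<Sum>k\<in>B. \<pi> k) = (\<Sum>k\<in>B \<inter> W. \<pi> k)"
    using fin core_loser_zero[OF val eff pc] unfolding B_def W_def
    by (intro sum.mono_neutral_right) auto
  also have "\<dots> \<le> real (card (B \<inter> W)) * \<pi> i" using sum_bounded_above[of "B \<inter> W" \<pi> "\<pi> i"]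
    unfolding B_def by auto
  also have "\<dots> \<le> real (card (W - {i})) * \<pi> i"
  proof (rule mult_right_mono)
    show "real (card (B \<inter> W)) \<le> real (card (W - {i}))"
      using fW by (auto simp: B_def intro: card_mono)
    show "0 \<le> \<pi> i" using pc iW unfolding core_def W_def winners_def by auto
  qed
  also have "\<dots> = (real (card W) - 1) * \<pi> i"
  proof -
    have "1 \<le> card W" using fW iW unfolding W_def by (metis One_nat_def Suc_leI card_gt_0_iff empty_iff)
    then show ?thesis using fW iW unfolding W_def by (simp add: of_nat_diff)
  qed
  finally show ?thesis unfolding B_def W_def .
qed

lemma core_raise_winner:
  assumes val: "valid_CA N M v" and eff: "efficient_alloc N M v a"
    and \<pi>c: "\<pi> \<in> core N M v" and pc: "p \<in> core N M v" and iW: "i \<in> winners N a"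
    and le: "\<pi> i \<le> c" and c_le: "real (card (winners N a)) * c \<le> p i"
  shows "(\<lambda>k. if k = i then c else if k \<in> N \<and> \<pi> k \<le> \<pi> i then \<pi> k else 0) \<in> core N M v"
    (is "?y \<in> _")
proof -
  define B where "B = {k\<in>N - {i}. \<pi> k \<le> \<pi> i}"
  have fin: "finite N" using val unfolding valid_CA_def by auto
  have iN: "i \<in> N" using iW unfolding winners_def by auto
  have \<pi>nn: "\<forall>k\<in>N. 0 \<le> \<pi> k" using \<pi>c unfolding core_def by auto
  have K: "1 \<le> real (card (winners N a))"
    using iW fin unfolding winners_def by (simp add: Suc_le_eq card_gt_0_iff) blast
  have "(\<Sum>k\<in>N - S. ?y k) \<le> wval M v N - wval M v S" if S: "S \<subseteq> N" for S
  proof (cases "i \<in> S")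
    case True
    then have "(\<Sum>k\<in>N - S. ?y k) \<le> (\<Sum>k\<in>N - S. \<pi> k)" using \<pi>nn by (intro sum_mono) auto
    also have "\<dots> \<le> wval M v N - wval M v S" using \<pi>c S unfolding core_def by auto
    finally show ?thesis .
  next
    case False
    have "(\<Sum>k\<in>N - S - {i}. ?y k) \<le> (\<Sum>k\<in>N - {i}. ?y k)"
      using fin \<pi>nn le by (intro sum_mono2) auto
    also have "\<dots> = (\<Sum>k\<in>N - {i}. if \<pi> k \<le> \<pi> i then \<pi> k else 0)"
      by (intro sum.cong) auto
    also have "\<dots> = (\<Sum>k\<in>B. \<pi> k)"
      unfolding B_def by (rule sum.inter_filter[symmetric]) (use fin in simp)
    also have "\<dots> \<le> (real (card (winners N a)) - 1) * \<pi> i"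
      unfolding B_def by (rule core_sum_lower_payments_le[OF val eff \<pi>c iW])
    also have "\<dots> \<le> (real (card (winners N a)) - 1) * c" using K le by (intro mult_left_mono) auto
    finally have "(\<Sum>k\<in>N - S. ?y k) \<le> c + (real (card (winners N a)) - 1) * c"
      using False iN fin by (simp add: sum.remove[of "N - S" i])
    also have "\<dots> \<le> p i" using c_le by (simp add: algebra_simps)
    also have "\<dots> \<le> wval M v N - wval M v S" using core_le_marginal_value[OF pc fin S] False iN by auto
    finally show ?thesis .
  qed
  then show ?thesis using \<pi>nn le iN unfolding core_def by auto
qed

section \<open>Leximin domination\<close>

lemma mset_map_sorted_list_of_set:
  "finite A \<Longrightarrow> mset (map x (sorted_list_of_set A)) = image_mset x (mset_set A)"
  by (metis mset_map mset_sorted_list_of_multiset sorted_list_of_mset_set)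

lemma sorted_entries_split:
  fixes x :: "nat \<Rightarrow> real"
  assumes fin: "finite N" and iN: "i \<in> N" and BN: "B \<subseteq> N - {i}"
    and lo: "\<forall>k\<in>B. x k \<le> x i" and hi: "\<forall>k\<in>N - B - {i}. x i \<le> x k"
  shows "sorted_entries N x = sort (map x (sorted_list_of_set B)) @ [x i] @
            sort (map x (sorted_list_of_set (N - B - {i})))"
proof -
  have fB: "finite B" using fin BN finite_subset by blast
  have fC: "finite (N - B - {i})" using fin by simp
  have Neq: "N = B \<union> ({i} \<union> (N - B - {i}))" using iN BN by blast
  have "mset_set N = mset_set B + mset_set ({i} \<union> (N - B - {i}))"
    using fB fC BN by (subst Neq, subst mset_set_Union) auto
  also have "mset_set ({i} \<union> (N - B - {i})) = {#i#} + mset_set (N - B - {i})"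
    using fC by (subst mset_set_Union) auto
  finally have ms: "mset_set N = mset_set B + ({#i#} + mset_set (N - B - {i}))" .
  show ?thesis unfolding sorted_entries_def
  proof (rule properties_for_sort)
    show "mset (sort (map x (sorted_list_of_set B)) @ [x i] @ sort (map x (sorted_list_of_set (N - B - {i}))))
        = mset (map x (sorted_list_of_set N))"
      using fin fB fC ms by (simp only: mset_append mset_map_sorted_list_of_set mset_sort) simp
    show "sorted (sort (map x (sorted_list_of_set B)) @ [x i] @ sort (map x (sorted_list_of_set (N - B - {i}))))"
      using lo hi fB fC by (auto simp: sorted_append intro: order_trans)
  qed
qed

lemma sorted_nth_le_const:
  fixes ys :: "real list"
  assumes sorted: "sorted ys" and sum: "sum_list ys \<le> real (length ys) * c"
    and m: "m < length ys" and prefix: "\<forall>j<m. ys ! j = c"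
  shows "ys ! m \<le> c"
proof (rule ccontr)
  assume "\<not> ys ! m \<le> c"
  then have above: "c < ys ! j" if "m \<le> j" "j < length ys" for j
    using sorted_nth_mono[OF sorted that] by simp
  have "c \<le> ys ! j" if "j < length ys" for j
    using prefix above[of j] that by (cases "j < m") auto
  then have "(\<Sum>j<length ys. c) < (\<Sum>j<length ys. ys ! j)"
    using above[of m] m by (intro sum_strict_mono_ex1) auto
  then show False using sum by (simp add: sum_list_sum_nth atLeast0LessThan)
qed

lemma sum_list_sort_map_sorted_list_of_set:
  fixes x :: "'a::linorder \<Rightarrow> 'b::{linorder, comm_monoid_add}"
  assumes "finite A"
  shows "sum_list (sort (map x (sorted_list_of_set A))) = sum x A"
proof -
  have "sum_list (sort (map x (sorted_list_of_set A))) = sum_list (map x (sorted_list_of_set A))"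
    by (metis mset_sort sum_mset_sum_list)
  also have "\<dots> = sum x (set (sorted_list_of_set A))" by (rule sum_list_distinct_conv_sum_set) simp
  also have "set (sorted_list_of_set A) = A" using assms by (rule set_sorted_list_of_set)
  finally show ?thesis .
qed

lemma leximin_dominates_raise:
  fixes x y :: "nat \<Rightarrow> real"
  assumes fin: "finite N" and iN: "i \<in> N" and gt: "x i < y i"
    and lower: "\<forall>k\<in>N - {i}. x k \<le> x i \<longrightarrow> y k = x k"
    and upper: "\<forall>k\<in>N - {i}. x i < x k \<longrightarrow> y i \<le> y k"
  shows "leximin_dominates N y x"
proof -
  define B where "B = {k\<in>N - {i}. x k \<le> x i}"
  have BN: "B \<subseteq> N - {i}" and C: "N - B - {i} = {k\<in>N - {i}. x i < x k}" unfolding B_def by auto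
  have yB: "map y (sorted_list_of_set B) = map x (sorted_list_of_set B)"
    using lower fin unfolding B_def by (intro map_cong) auto
  have sx: "sorted_entries N x = sort (map x (sorted_list_of_set B)) @ [x i] @
            sort (map x (sorted_list_of_set (N - B - {i})))"
    using fin iN BN by (rule sorted_entries_split) (auto simp: B_def C)
  have sy: "sorted_entries N y = sort (map x (sorted_list_of_set B)) @ [y i] @
            sort (map y (sorted_list_of_set (N - B - {i})))"
    unfolding yB[symmetric] using fin iN BN
    by (rule sorted_entries_split) (use lower upper gt in \<open>auto simp: B_def C\<close>)
  have "card B < card N" using fin iN BN by (meson card_Diff1_less card_mono finite_Diff le_less_trans)
  moreover have "length (sort (map x (sorted_list_of_set B))) = card B" by simp
  ultimately show ?thesis
    unfolding leximin_dominates_def sx sy using gt by (intro exI[of _ "card B"]) (simp add: nth_append)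
qed

lemma eventually_leximin_dominates_towards:
  fixes x y :: "nat \<Rightarrow> real"
  assumes fin: "finite N" and iN: "i \<in> N" and gt: "x i < y i"
    and lower: "\<forall>k\<in>N - {i}. x k \<le> x i \<longrightarrow> y k = x k"
  shows "\<forall>\<^sub>F t in at_right 0. leximin_dominates N (\<lambda>k. (1 - t) * x k + t * y k) x"
proof -
  have "\<forall>\<^sub>F t in at_right 0. (1 - t) * x i + t * y i \<le> (1 - t) * x k + t * y k"
    if "x i < x k" for k
  proof -
    have "((\<lambda>t. (1 - t) * x k + t * y k - ((1 - t) * x i + t * y i)) \<longlongrightarrow> x k - x i) (at_right 0)"
      by (rule tendsto_eq_intros | simp)+
    then have "\<forall>\<^sub>F t in at_right 0. 0 < (1 - t) * x k + t * y k - ((1 - t) * x i + t * y i)"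
      using that by (intro order_tendstoD(1)) auto
    then show ?thesis by eventually_elim simp
  qed
  then have "\<forall>\<^sub>F t in at_right 0. \<forall>k\<in>{k\<in>N - {i}. x i < x k}.
               (1 - t) * x i + t * y i \<le> (1 - t) * x k + t * y k"
    using fin by (intro eventually_ball_finite) auto
  moreover have "\<forall>\<^sub>F t in at_right 0. (0::real) < t" by (rule eventually_at_right_less)
  ultimately show ?thesis
  proof eventually_elim
    case (elim t)
    show ?case
      by (rule leximin_dominates_raise[OF fin iN]) (use elim gt lower in \<open>auto simp: algebra_simps\<close>)
  qed
qed

lemma is_BLO_not_raisable:
  assumes blo: "is_BLO N M v \<pi>" and fin: "finite N" and iN: "i \<in> N" and yc: "y \<in> core N M v"
    and lower: "\<forall>k\<in>N - {i}. \<pi> k \<le> \<pi> i \<longrightarrow> y k = \<pi> k"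
  shows "y i \<le> \<pi> i"
proof (rule ccontr)
  assume "\<not> y i \<le> \<pi> i"
  then have "\<forall>\<^sub>F t in at_right 0. leximin_dominates N (\<lambda>k. (1 - t) * \<pi> k + t * y k) \<pi>"
    using fin iN lower by (intro eventually_leximin_dominates_towards) auto
  moreover have "\<forall>\<^sub>F t in at_right 0. (0::real) < t" by (rule eventually_at_right_less)
  moreover have "\<forall>\<^sub>F t in at_right 0. t < (1::real)"
    by (rule order_tendstoD(2)[OF tendsto_ident_at]) simp
  ultimately have "\<forall>\<^sub>F t in at_right 0.
      leximin_dominates N (\<lambda>k. (1 - t) * \<pi> k + t * y k) \<pi> \<and> 0 < t \<and> t < 1"
    by eventually_elim blast
  then obtain t where "leximin_dominates N (\<lambda>k. (1 - t) * \<pi> k + t * y k) \<pi>" "0 < t" "t < 1"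
    using eventually_happens'[OF trivial_limit_at_right_real] by blast
  moreover have "(\<lambda>k. (1 - t) * \<pi> k + t * y k) \<in> core N M v"
    using blo yc \<open>0 < t\<close> \<open>t < 1\<close> unfolding is_BLO_def by (intro core_convex_combination) auto
  ultimately show False using blo unfolding is_BLO_def by blast
qed

section \<open>The lower bound\<close>

theorem BLO_ge_pi_star_div_winners:
  assumes val: "valid_CA N M v" and eff: "efficient_alloc N M v a" and W: "winners N a \<noteq> {}"
    and blo: "is_BLO N M v \<pi>" and iN: "i \<in> N"
  shows "pi_star N M v i / real (card (winners N a)) \<le> \<pi> i"
proof (rule ccontr)
  define K where "K = real (card (winners N a))"
  have fin: "finite N" using val unfolding valid_CA_def by auto
  have K: "0 < K" using W fin unfolding K_def winners_def by (simp add: card_gt_0_iff)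
  have \<pi>c: "\<pi> \<in> core N M v" using blo unfolding is_BLO_def by auto
  have \<pi>i: "0 \<le> \<pi> i" using \<pi>c iN unfolding core_def by auto
  assume "\<not> ?thesis"
  then have "K * \<pi> i < Sup ((\<lambda>p. p i) ` core N M v)"
    using K unfolding K_def pi_star_def by (simp add: field_simps)
  moreover have "bdd_above ((\<lambda>p. p i) ` core N M v)"
    unfolding bdd_above_def using core_le_marginal_value[of _ N M v "{}" i] fin iN by auto
  ultimately obtain p where pc: "p \<in> core N M v" and p: "K * \<pi> i < p i"
    using \<pi>c by (subst (asm) less_cSup_iff) auto
  have "0 \<le> K * \<pi> i" using \<pi>i K by simp
  with p have "0 < p i" by linarith
  then have iW: "i \<in> winners N a" using core_loser_zero[OF val eff pc iN] by fastforce
  define c where "c = p i / K"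
  have "\<pi> i < c" using p K unfolding c_def by (simp add: field_simps)
  define y where "y = (\<lambda>k. if k = i then c else if k \<in> N \<and> \<pi> k \<le> \<pi> i then \<pi> k else 0)"
  have "y \<in> core N M v"
    unfolding y_def using \<open>\<pi> i < c\<close> K
    by (intro core_raise_winner[OF val eff \<pi>c pc iW]) (auto simp: c_def K_def)
  then have "y i \<le> \<pi> i" by (rule is_BLO_not_raisable[OF blo fin iN]) (auto simp: y_def)
  with \<open>\<pi> i < c\<close> show False by (simp add: y_def)
qed

section \<open>A family attaining the bound\<close>

definition tight_valuation :: "nat \<Rightarrow> nat \<Rightarrow> nat set \<Rightarrow> real" where
  "tight_valuation k j A =
     (if j = 0 then if A = {1..k} then real k - 1 else 0 else if j \<in> A then 1 else 0)"

definition tight_allocation :: "nat \<Rightarrow> nat \<Rightarrow> nat set" where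
  "tight_allocation k j = {j} \<inter> {1..k}"

definition uniform_payment :: "nat \<Rightarrow> nat \<Rightarrow> real" where
  "uniform_payment k j = (if j \<in> {1..k} then 1 / real k else 0)"

lemma tight_valid: "1 \<le> k \<Longrightarrow> valid_CA {0..k} {1..k} (tight_valuation k)"
  unfolding valid_CA_def tight_valuation_def by auto

lemma feasible_tight_allocation: "feasible_alloc {1..k} S (tight_allocation k)"
  unfolding feasible_alloc_def tight_allocation_def by auto

lemma winners_tight_allocation: "winners {0..k} (tight_allocation k) = {1..k}"
  unfolding winners_def tight_allocation_def by auto

lemma tight_alloc_value_le:
  assumes k: "1 \<le> k" and S: "S \<subseteq> {0..k}" and b: "feasible_alloc {1..k} S b"
  shows "(\<Sum>j\<in>S. tight_valuation k j (b j)) \<le> (if {1..k} \<subseteq> S then real k else real k - 1)"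
proof -
  have fS: "finite S" using S finite_subset by blast
  show ?thesis
  proof (cases "0 \<in> S \<and> b 0 = {1..k}")
    case True
    then have "\<forall>j\<in>S - {0}. b j = {}" using b unfolding feasible_alloc_def by blast
    then have "(\<Sum>j\<in>S. tight_valuation k j (b j)) = tight_valuation k 0 (b 0)"
      using True fS by (subst sum.remove[of _ 0]) (auto simp: tight_valuation_def)
    then show ?thesis using True by (simp add: tight_valuation_def)
  next
    case False
    have "(\<Sum>j\<in>S. tight_valuation k j (b j)) = (\<Sum>j\<in>S - {0}. tight_valuation k j (b j))"
      using False fS by (intro sum.mono_neutral_right) (auto simp: tight_valuation_def)
    also have "\<dots> \<le> (\<Sum>j\<in>S - {0}. 1)" by (intro sum_mono) (auto simp: tight_valuation_def)
    also have "\<dots> = real (card (S - {0}))" by simp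
    also have "\<dots> \<le> (if {1..k} \<subseteq> S then real k else real k - 1)"
    proof -
      have sub: "S - {0} \<subseteq> {1..k}" using S by auto
      then have "card (S - {0}) \<le> k" using card_mono[OF _ sub] by simp
      moreover have "real (card (S - {0})) \<le> real k - 1" if "\<not> {1..k} \<subseteq> S"
      proof -
        have "card (S - {0}) < k" using psubset_card_mono[of "{1..k}" "S - {0}"] sub that by auto
        then have "real (card (S - {0}) + 1) \<le> real k" by (simp only: of_nat_le_iff)
        then show ?thesis by simp
      qed
      ultimately show ?thesis by simp
    qed
    finally show ?thesis .
  qed
qed

lemma tight_wval_le:
  assumes k: "1 \<le> k" and S: "S \<subseteq> {0..k}"
  shows "wval {1..k} (tight_valuation k) S \<le> (if {1..k} \<subseteq> S then real k else real k - 1)"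
proof (rule wval_le)
  show "finite S" using S finite_subset by blast
qed (use tight_alloc_value_le[OF k S] in auto)

lemma tight_allocation_value:
  assumes "1 \<le> k" "finite S"
  shows "(\<Sum>j\<in>S. tight_valuation k j (tight_allocation k j)) = real (card (S \<inter> {1..k}))"
proof -
  have "(\<Sum>j\<in>S. tight_valuation k j (tight_allocation k j)) = (\<Sum>j\<in>S. if j \<in> {1..k} then 1 else 0)"
    using assms(1) by (intro sum.cong) (auto simp: tight_valuation_def tight_allocation_def)
  also have "\<dots> = (\<Sum>j\<in>S \<inter> {1..k}. 1)" using assms(2) by (rule sum.inter_restrict[symmetric])
  finally show ?thesis by simp
qed

lemma tight_wval_ge:
  "1 \<le> k \<Longrightarrow> finite S \<Longrightarrow> real (card (S \<inter> {1..k})) \<le> wval {1..k} (tight_valuation k) S"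
  using alloc_value_le_wval[OF _ _ feasible_tight_allocation] tight_allocation_value by (metis finite_atLeastAtMost)

lemma tight_wval_all: "1 \<le> k \<Longrightarrow> wval {1..k} (tight_valuation k) {0..k} = real k"
  using tight_wval_le[of k "{0..k}"] tight_wval_ge[of k "{0..k}"] by (simp add: Int_absorb1)

lemma tight_wval_package: "1 \<le> k \<Longrightarrow> real k - 1 \<le> wval {1..k} (tight_valuation k) {0}"
  using alloc_value_le_wval[of "{0}" "{1..k}" "\<lambda>_. {1..k}" "tight_valuation k"]
  by (simp add: feasible_alloc_def tight_valuation_def)

text \<open>Bidder 0 pays nothing because the single-minded bidders alone achieve the optimum, and the
others pay at most \<open>k - (k - 1)\<close> in total because the coalition \<open>{0}\<close> achieves \<open>k - 1\<close>.\<close>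

lemma tight_core_iff:
  assumes k: "1 \<le> k"
  shows "x \<in> core {0..k} {1..k} (tight_valuation k) \<longleftrightarrow>
    (\<forall>j. j \<notin> {1..k} \<longrightarrow> x j = 0) \<and> (\<forall>j\<in>{1..k}. 0 \<le> x j) \<and> (\<Sum>j=1..k. x j) \<le> 1"
  (is "_ \<longleftrightarrow> ?simplex")
proof
  assume xc: "x \<in> core {0..k} {1..k} (tight_valuation k)"
  then have outside: "\<forall>j. j \<notin> {0..k} \<longrightarrow> x j = 0" and nonneg: "\<forall>j\<in>{0..k}. 0 \<le> x j"
    and bound: "(\<Sum>j\<in>{0..k} - {0}. x j) \<le> wval {1..k} (tight_valuation k) {0..k} - wval {1..k} (tight_valuation k) {0}"
    unfolding core_def by auto
  have "x 0 \<le> 0"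
    using core_le_marginal_value[OF xc, of "{1..k}" 0] tight_wval_all[OF k] tight_wval_ge[OF k, of "{1..k}"]
    by simp
  moreover have "0 \<le> x 0" using nonneg by simp
  ultimately have "x j = 0" if "j \<notin> {1..k}" for j
    using outside that by (cases "j = 0") auto
  moreover have "{0..k} - {0} = {1..k}" by auto
  then have "(\<Sum>j=1..k. x j) \<le> 1" using bound tight_wval_all[OF k] tight_wval_package[OF k] by simp
  ultimately show ?simplex using nonneg by auto
next
  assume H: ?simplex
  have "(\<Sum>j\<in>{0..k} - S. x j) \<le> wval {1..k} (tight_valuation k) {0..k} - wval {1..k} (tight_valuation k) S"
    if S: "S \<subseteq> {0..k}" for S
  proof -
    have "(\<Sum>j\<in>{0..k} - S. x j) \<le> (if {1..k} \<subseteq> S then 0 else 1)"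
    proof (cases "{1..k} \<subseteq> S")
      case True
      then have "(\<Sum>j\<in>{0..k} - S. x j) = 0" using H by (intro sum.neutral) blast
      then show ?thesis using True by simp
    next
      case False
      have "(\<Sum>j\<in>{0..k} - S. x j) \<le> (\<Sum>j\<in>{0..k}. x j)"
        using H by (intro sum_mono2) (auto simp: not_le)
      also have "\<dots> = (\<Sum>j=1..k. x j)" using H by (intro sum.mono_neutral_right) auto
      finally show ?thesis using H False by simp
    qed
    then show ?thesis using tight_wval_le[OF k S] tight_wval_all[OF k] by (auto split: if_splits)
  qed
  moreover have "0 \<le> x j" for j using H by (cases "j \<in> {1..k}") auto
  ultimately show "x \<in> core {0..k} {1..k} (tight_valuation k)" using H unfolding core_def by auto
qed

lemma uniform_payment_in_core: "1 \<le> k \<Longrightarrow> uniform_payment k \<in> core {0..k} {1..k} (tight_valuation k)"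
  by (subst tight_core_iff) (auto simp: uniform_payment_def)

lemma tight_sorted_entries:
  assumes k: "1 \<le> k" and xc: "x \<in> core {0..k} {1..k} (tight_valuation k)"
  shows "sorted_entries {0..k} x = 0 # sort (map x (sorted_list_of_set {1..k}))"
proof -
  have e: "{0..k} - {} - {0} = {1..k}" by auto
  have "sorted_entries {0..k} x = sort (map x (sorted_list_of_set {})) @ [x 0] @
          sort (map x (sorted_list_of_set ({0..k} - {} - {0})))"
    by (rule sorted_entries_split) (use xc tight_core_iff[OF k] e in auto)
  then show ?thesis using xc tight_core_iff[OF k] unfolding e by simp
qed

lemma tight_sorted_entries_uniform:
  assumes k: "1 \<le> k"
  shows "sorted_entries {0..k} (uniform_payment k) = 0 # replicate k (1 / real k)"
proof -
  have "map (uniform_payment k) (sorted_list_of_set {1..k}) = map (\<lambda>_. 1 / real k) (sorted_list_of_set {1..k})"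
    by (intro map_cong) (auto simp: uniform_payment_def)
  then show ?thesis
    using tight_sorted_entries[OF k uniform_payment_in_core[OF k]] by (simp add: map_replicate_const)
qed

lemma tight_sorted_payments_le_uniform:
  assumes k: "1 \<le> k" and xc: "x \<in> core {0..k} {1..k} (tight_valuation k)"
    and m: "m < k" and prefix: "\<forall>j<m. sort (map x (sorted_list_of_set {1..k})) ! j = 1 / real k"
  shows "sort (map x (sorted_list_of_set {1..k})) ! m \<le> 1 / real k"
  using xc k m prefix sum_list_sort_map_sorted_list_of_set[of "{1..k}" x] unfolding tight_core_iff[OF k]
  by (intro sorted_nth_le_const) auto

lemma tight_uniform_payment_is_BLO: "1 \<le> k \<Longrightarrow> is_BLO {0..k} {1..k} (tight_valuation k) (uniform_payment k)"
proof -
  assume k: "1 \<le> k"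
  have "\<not> leximin_dominates {0..k} p (uniform_payment k)"
    if pc: "p \<in> core {0..k} {1..k} (tight_valuation k)" for p
  proof
    define ys where "ys = sort (map p (sorted_list_of_set {1..k}))"
    assume "leximin_dominates {0..k} p (uniform_payment k)"
    then obtain m where "m < Suc k" and "\<forall>j<m. (0 # ys) ! j = (0 # replicate k (1 / real k)) ! j"
      and "(0 # replicate k (1 / real k)) ! m < (0 # ys) ! m"
      unfolding leximin_dominates_def tight_sorted_entries[OF k pc] tight_sorted_entries_uniform[OF k]
        ys_def by auto
    then show False
    proof (cases m)
      case (Suc l)
      with \<open>m < Suc k\<close> \<open>\<forall>j<m. _\<close> have "l < k" "\<forall>j<l. ys ! j = 1 / real k" by auto
      then have "ys ! l \<le> 1 / real k"
        unfolding ys_def by (rule tight_sorted_payments_le_uniform[OF k pc])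
      with \<open>_ < (0 # ys) ! m\<close> Suc \<open>l < k\<close> show False by simp
    qed simp
  qed
  then show ?thesis using uniform_payment_in_core[OF k] unfolding is_BLO_def by blast
qed

lemma tight_is_BLO_imp_uniform:
  assumes k: "1 \<le> k" and blo: "is_BLO {0..k} {1..k} (tight_valuation k) \<pi>"
  shows "\<pi> = uniform_payment k"
proof -
  define ys where "ys = sort (map \<pi> (sorted_list_of_set {1..k}))"
  have \<pi>c: "\<pi> \<in> core {0..k} {1..k} (tight_valuation k)" using blo unfolding is_BLO_def by auto
  have "ys = replicate k (1 / real k)"
  proof (rule ccontr)
    assume "ys \<noteq> replicate k (1 / real k)"
    then have "\<exists>m. m < k \<and> ys ! m \<noteq> 1 / real k" by (auto simp: ys_def list_eq_iff_nth_eq)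
    then obtain m where m: "m < k" "ys ! m \<noteq> 1 / real k"
      and least: "\<forall>j<m. \<not> (j < k \<and> ys ! j \<noteq> 1 / real k)"
      by (subst (asm) exists_least_iff) blast
    then have prefix: "\<forall>j<m. ys ! j = 1 / real k" by auto
    then have "ys ! m \<le> 1 / real k"
      unfolding ys_def by (rule tight_sorted_payments_le_uniform[OF k \<pi>c m(1)])
    with m(2) have less: "ys ! m < 1 / real k" by simp
    have "leximin_dominates {0..k} (uniform_payment k) \<pi>"
      unfolding leximin_dominates_def tight_sorted_entries[OF k \<pi>c] tight_sorted_entries_uniform[OF k]
        ys_def[symmetric]
    proof (intro exI[of _ "Suc m"] conjI allI impI)
      show "Suc m < card {0..k}" using m by simp
      show "(0 # replicate k (1 / real k)) ! j = (0 # ys) ! j" if "j < Suc m" for j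
        using that prefix m by (cases j) auto
      show "(0 # ys) ! Suc m < (0 # replicate k (1 / real k)) ! Suc m" using less m by simp
    qed
    then show False using blo uniform_payment_in_core[OF k] unfolding is_BLO_def by blast
  qed
  moreover have "\<pi> j \<in> set ys" if "j \<in> {1..k}" for j using that by (simp add: ys_def)
  ultimately have "\<pi> j = 1 / real k" if "j \<in> {1..k}" for j using that by auto
  then show ?thesis using \<pi>c tight_core_iff[OF k] by (auto simp: uniform_payment_def)
qed

lemma tight_pi_star:
  assumes k: "1 \<le> k"
  shows "pi_star {0..k} {1..k} (tight_valuation k) 1 = 1"
  unfolding pi_star_def
proof (rule cSup_eq_maximum)
  have "(\<lambda>j. if j = 1 then 1 else 0) \<in> core {0..k} {1..k} (tight_valuation k)"
    using k by (subst tight_core_iff) auto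
  then show "1 \<in> (\<lambda>p. p 1) ` core {0..k} {1..k} (tight_valuation k)" by (rule rev_image_eqI) simp
  show "y \<le> 1" if y: "y \<in> (\<lambda>p. p 1) ` core {0..k} {1..k} (tight_valuation k)" for y
  proof -
    obtain x where "x \<in> core {0..k} {1..k} (tight_valuation k)" "y = x 1" using y by blast
    then have "\<forall>j\<in>{1..k}. 0 \<le> x j" "(\<Sum>j=1..k. x j) \<le> 1" "y = x 1"
      using tight_core_iff[OF k] by auto
    moreover have "x 1 \<le> (\<Sum>j=1..k. x j)"
      using k \<open>\<forall>j\<in>{1..k}. 0 \<le> x j\<close> by (intro member_le_sum) auto
    ultimately show ?thesis by simp
  qed
qed

lemma tight_family:
  assumes k: "1 \<le> k"
  shows "valid_CA {0..k} {1..k} (tight_valuation k)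
    \<and> efficient_alloc {0..k} {1..k} (tight_valuation k) (tight_allocation k)
    \<and> card (winners {0..k} (tight_allocation k)) = k \<and> 1 \<in> {0..k}
    \<and> pi_star {0..k} {1..k} (tight_valuation k) 1 > 0
    \<and> (\<exists>\<pi>. is_BLO {0..k} {1..k} (tight_valuation k) \<pi>)
    \<and> (\<forall>\<pi>. is_BLO {0..k} {1..k} (tight_valuation k) \<pi> \<longrightarrow>
          \<pi> 1 = pi_star {0..k} {1..k} (tight_valuation k) 1 / real k)"
proof (intro conjI allI impI exI)
  show "efficient_alloc {0..k} {1..k} (tight_valuation k) (tight_allocation k)"
    using tight_wval_all[OF k] tight_allocation_value[OF k, of "{0..k}"] feasible_tight_allocation
    unfolding efficient_alloc_def by (simp add: Int_absorb1)
  show "is_BLO {0..k} {1..k} (tight_valuation k) (uniform_payment k)"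
    by (rule tight_uniform_payment_is_BLO[OF k])
  fix \<pi> assume "is_BLO {0..k} {1..k} (tight_valuation k) \<pi>"
  then have "\<pi> = uniform_payment k" by (rule tight_is_BLO_imp_uniform[OF k])
  then show "\<pi> 1 = pi_star {0..k} {1..k} (tight_valuation k) 1 / real k"
    using k tight_pi_star[OF k] by (simp add: uniform_payment_def)
qed (use k tight_valid[OF k] winners_tight_allocation[of k] tight_pi_star[OF k] in auto)

theorem theorem2:
  shows "(\<forall>N M v a \<pi> i.
            valid_CA N M v \<longrightarrow> efficient_alloc N M v a \<longrightarrow> winners N a \<noteq> {} \<longrightarrow>
            is_BLO N M v \<pi> \<longrightarrow> i \<in> N \<longrightarrow>
            \<pi> i \<ge> pi_star N M v i / real (card (winners N a)))
       \<and> (\<forall>k::nat. k \<ge> 1 \<longrightarrow>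
            (\<exists>N M v a i. valid_CA N M v \<and> efficient_alloc N M v a \<and>
                 card (winners N a) = k \<and> i \<in> N \<and> pi_star N M v i > 0 \<and>
                 (\<exists>\<pi>. is_BLO N M v \<pi>) \<and>
                 (\<forall>\<pi>. is_BLO N M v \<pi> \<longrightarrow> \<pi> i = pi_star N M v i / real k)))"
proof (intro conjI allI impI)
  fix N M v a \<pi> i
  assume "valid_CA N M v" "efficient_alloc N M v a" "winners N a \<noteq> {}" "is_BLO N M v \<pi>" "i \<in> N"
  then show "pi_star N M v i / real (card (winners N a)) \<le> \<pi> i"
    by (rule BLO_ge_pi_star_div_winners)
next
  fix k :: nat
  assume "1 \<le> k"
  then show "\<exists>N M v a i. valid_CA N M v \<and> efficient_alloc N M v a \<and>
                 card (winners N a) = k \<and> i \<in> N \<and> pi_star N M v i > 0 \<and>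
                 (\<exists>\<pi>. is_BLO N M v \<pi>) \<and>
                 (\<forall>\<pi>. is_BLO N M v \<pi> \<longrightarrow> \<pi> i = pi_star N M v i / real k)"
    by (intro exI) (rule tight_family)
qed

end
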